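(* Let $k$ be a positive integer. Suppose $(x_i)_{i\ge0}$ is a sequence of integers such that $x_0=1$, $2k\mid x_i$ for all $i\ge1$, and for each $i\ge1$, $4k\mid x_i$ if and only if $i$ is not a power of two. Then for every $n\in\mathbb{N}$, the number $(2k)^{-n}\det[x_{i+j}]_{0\le i,j\le n}$ is an odd integer.
   Context: Powers of two are $1,2,4,8,\ldots$. $\det[x_{i+j}]_{0\le i,j\le n}$ denotes the determinant of the $(n+1)\times(n+1)$ Hankel matrix with $(i,j)$-entry $x_{i+j}$. *)

theory Defs
  imports "Jordan_Normal_Form.Determinant"
begin

definition is_power_of_two :: "nat \<Rightarrow> bool" where
  "is_power_of_two i \<longleftrightarrow> (\<exists>m::nat. i = 2 ^ m)"

definition hankel_mat :: "(nat \<Rightarrow> int) \<Rightarrow> nat \<Rightarrow> int mat" where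
  "hankel_mat x n = mat (Suc n) (Suc n) (\<lambda>(i, j). x (i + j))"

end

theory Submission
  imports Defs
begin

(* Expand the determinant by the Leibniz formula. The term of a permutation p is the product
   of the entries x (i + p i); each entry with a positive index is divisible by c = 2k, so the
   term is divisible by 2 c^n unless p fixes 0 and i + p i is a power of two for every
   i \<in> {1..n}. There is exactly one such "power-of-two pairing" of {1..n}: if
   2^t \<le> n < 2^(t+1), every i \<ge> 2^(t+1) - n must be paired with 2^(t+1) - i, and what is
   left is a pairing of {1..2^(t+1)-n-1}. Its term is c^n times an odd number, hence so is
   the determinant. *)

definition power_of_two_pairing :: "nat \<Rightarrow> (nat \<Rightarrow> nat) \<Rightarrow> bool" where
  "power_of_two_pairing n p \<longleftrightarrow>
     p permutes {1..n} \<and> (\<forall>i\<in>{1..n}. is_power_of_two (i + p i))"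

definition mirror :: "nat \<Rightarrow> nat \<Rightarrow> nat \<Rightarrow> nat" where
  "mirror a b i = (if i \<in> {a..b} then a + b - i else i)"

lemma mirror_mirror [simp]: "mirror a b (mirror a b i) = i"
  by (auto simp: mirror_def)

lemma mirror_permutes: "mirror a b permutes {a..b}"
  unfolding permutes_def by (metis mirror_def mirror_mirror)

lemma power_of_two_between:
  assumes "is_power_of_two s" "(2::nat) ^ t < s" "s < 2 ^ Suc (Suc t)"
  shows "s = 2 ^ Suc t"
proof -
  obtain u where u: "s = 2 ^ u" using assms(1) unfolding is_power_of_two_def by blast
  have "t < u" "u < Suc (Suc t)"
    using assms(2,3) unfolding u by (simp_all only: power_strict_increasing_iff one_less_numeral_iff semiring_norm(76))
  then have "u = Suc t" by simp
  then show ?thesis using u by simp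
qed

lemma power_of_two_pairing_in:
  assumes "power_of_two_pairing n p" "i \<in> {1..n}"
  shows "p i \<in> {1..n}"
  using assms permutes_in_image[of p "{1..n}" i] unfolding power_of_two_pairing_def by blast

(* Plain \<open>inv\<close> is taken by the group-inverse syntax of the imported algebra library. *)
lemma power_of_two_pairing_inv:
  assumes "power_of_two_pairing n p"
  shows "power_of_two_pairing n (Hilbert_Choice.inv p)"
proof -
  have p: "p permutes {1..n}" using assms unfolding power_of_two_pairing_def by blast
  have "is_power_of_two (i + Hilbert_Choice.inv p i)" if "i \<in> {1..n}" for i
  proof -
    have "Hilbert_Choice.inv p i \<in> {1..n}" using that permutes_in_image[OF permutes_inv[OF p]] by blast
    then have "is_power_of_two (Hilbert_Choice.inv p i + p (Hilbert_Choice.inv p i))"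
      using assms unfolding power_of_two_pairing_def by blast
    then show ?thesis by (simp add: permutes_inverses(1)[OF p] add.commute)
  qed
  then show ?thesis unfolding power_of_two_pairing_def using permutes_inv[OF p] by blast
qed

context
  fixes n t :: nat
  assumes lower: "2 ^ t \<le> n" and upper: "n < 2 ^ Suc t"
begin

lemma power_of_two_pairing_sum:
  assumes "power_of_two_pairing n p" "i \<in> {1..n}" "2 ^ t < i + p i"
  shows "i + p i = 2 ^ Suc t"
proof (rule power_of_two_between)
  have "p i \<in> {1..n}" using assms(1,2) by (rule power_of_two_pairing_in)
  then show "i + p i < 2 ^ Suc (Suc t)" using assms(2) upper by simp
qed (use assms in \<open>auto simp: power_of_two_pairing_def\<close>)

lemma power_of_two_pairing_top:
  assumes p: "power_of_two_pairing n p" and j: "j \<in> {2 ^ Suc t - n..n}"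
  shows "p j = 2 ^ Suc t - j"
proof (cases "2 ^ t \<le> j")
  case True
  have "j \<in> {1..n}" using j upper by auto
  moreover have "p j \<in> {1..n}" using p calculation by (rule power_of_two_pairing_in)
  ultimately have "j + p j = 2 ^ Suc t"
    using True by (intro power_of_two_pairing_sum[OF p]) auto
  then show ?thesis by simp
next
  case False
  have j': "2 ^ Suc t - j \<in> {1..n}" "2 ^ t < 2 ^ Suc t - j" using j False by auto
  have "Hilbert_Choice.inv p (2 ^ Suc t - j) \<in> {1..n}"
    using power_of_two_pairing_inv[OF p] j'(1) by (rule power_of_two_pairing_in)
  then have "(2 ^ Suc t - j) + Hilbert_Choice.inv p (2 ^ Suc t - j) = 2 ^ Suc t"
    using j' by (intro power_of_two_pairing_sum[OF power_of_two_pairing_inv[OF p]]) auto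
  then have "Hilbert_Choice.inv p (2 ^ Suc t - j) = j" using False by simp
  moreover have "p permutes {1..n}" using p unfolding power_of_two_pairing_def by blast
  ultimately show ?thesis by (metis permutes_inverses(1))
qed

lemma power_of_two_pairing_restrict:
  assumes p: "power_of_two_pairing n p"
  shows "power_of_two_pairing (2 ^ Suc t - n - 1) (p \<circ> mirror (2 ^ Suc t - n) n)"
proof -
  let ?M = "mirror (2 ^ Suc t - n) n"
  have "p permutes {1..n}" using p unfolding power_of_two_pairing_def by blast
  moreover have "?M permutes {1..n}"
    using upper by (intro permutes_subset[OF mirror_permutes]) auto
  ultimately have "p \<circ> ?M permutes {1..n}" by (rule permutes_compose[rotated])
  moreover have "(p \<circ> ?M) i = i" if "i \<in> {1..n} - {1..2 ^ Suc t - n - 1}" for i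
  proof -
    have "i \<in> {2 ^ Suc t - n..n}" "?M i \<in> {2 ^ Suc t - n..n}"
      using that upper by (auto simp: mirror_def)
    then show ?thesis using power_of_two_pairing_top[OF p] upper by (auto simp: mirror_def)
  qed
  ultimately have "p \<circ> ?M permutes {1..2 ^ Suc t - n - 1}" by (rule permutes_superset)
  moreover have "?M i = i" if "i \<in> {1..2 ^ Suc t - n - 1}" for i
    using that by (auto simp: mirror_def)
  ultimately show ?thesis using p lower unfolding power_of_two_pairing_def by auto
qed

lemma power_of_two_pairing_extend:
  assumes q: "power_of_two_pairing (2 ^ Suc t - n - 1) q"
  shows "power_of_two_pairing n (q \<circ> mirror (2 ^ Suc t - n) n)"
proof -
  let ?M = "mirror (2 ^ Suc t - n) n"
  have "q permutes {1..2 ^ Suc t - n - 1}" using q unfolding power_of_two_pairing_def by blast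
  then have "q permutes {1..n}" by (rule permutes_subset) (use lower in auto)
  moreover have "?M permutes {1..n}"
    using upper by (intro permutes_subset[OF mirror_permutes]) auto
  ultimately have "q \<circ> ?M permutes {1..n}" by (rule permutes_compose[rotated])
  moreover have "is_power_of_two (i + (q \<circ> ?M) i)" if i: "i \<in> {1..n}" for i
  proof (cases "i \<in> {2 ^ Suc t - n..n}")
    case True
    then have "?M i = 2 ^ Suc t - i" "2 ^ Suc t - i \<notin> {1..2 ^ Suc t - n - 1}"
      using upper by (auto simp: mirror_def)
    then have "q (?M i) = 2 ^ Suc t - i"
      using permutes_not_in[OF \<open>q permutes {1..2 ^ Suc t - n - 1}\<close>] by simp
    then have "i + (q \<circ> ?M) i = 2 ^ Suc t" using True upper by auto
    then show ?thesis unfolding is_power_of_two_def by blast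
  next
    case False
    then show ?thesis using q i unfolding power_of_two_pairing_def mirror_def by auto
  qed
  ultimately show ?thesis unfolding power_of_two_pairing_def by blast
qed

end

lemma power_of_two_pairing_exists: "\<exists>p. power_of_two_pairing n p"
proof (induction n rule: less_induct)
  case (less n)
  show ?case
  proof (cases "n = 0")
    case True
    then show ?thesis unfolding power_of_two_pairing_def by auto
  next
    case False
    then obtain t where t: "2 ^ t \<le> n" "n < 2 ^ Suc t" using ex_power_ivl1[of 2 n] by auto
    then obtain q where "power_of_two_pairing (2 ^ Suc t - n - 1) q" using less.IH by fastforce
    then show ?thesis using power_of_two_pairing_extend[OF t] by blast
  qed
qed

lemma power_of_two_pairing_unique:
  "power_of_two_pairing n p \<Longrightarrow> power_of_two_pairing n q \<Longrightarrow> p = q"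
proof (induction n arbitrary: p q rule: less_induct)
  case (less n)
  show ?case
  proof (cases "n = 0")
    case True
    then show ?thesis using less.prems unfolding power_of_two_pairing_def by simp
  next
    case False
    then obtain t where t: "2 ^ t \<le> n" "n < 2 ^ Suc t" using ex_power_ivl1[of 2 n] by auto
    let ?M = "mirror (2 ^ Suc t - n) n"
    have "p \<circ> ?M = q \<circ> ?M"
      using t less.prems
      by (intro less.IH[of "2 ^ Suc t - n - 1"] power_of_two_pairing_restrict) auto
    then show ?thesis by (metis comp_apply mirror_mirror ext)
  qed
qed

lemma prod_dvd_power_times:
  fixes f :: "'a \<Rightarrow> 'b::comm_semiring_1"
  assumes "finite A" "j \<in> A" "\<And>i. i \<in> A \<Longrightarrow> c dvd f i" "d * c dvd f j"
  shows "d * c ^ card A dvd prod f A"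
proof -
  have "(\<Prod>i\<in>A - {j}. c) dvd (\<Prod>i\<in>A - {j}. f i)" by (rule prod_dvd_prod) (use assms(3) in auto)
  then have "d * c * c ^ card (A - {j}) dvd f j * prod f (A - {j})"
    using assms(4) by (simp add: mult_dvd_mono)
  moreover have "prod f A = f j * prod f (A - {j})" using assms(1,2) by (rule prod.remove)
  moreover have "c ^ card A = c * c ^ card (A - {j})"
    using card_Suc_Diff1[OF assms(1,2)] by (metis power_Suc)
  ultimately show ?thesis by (simp add: mult.assoc)
qed

lemma prod_exact_multiples_odd:
  fixes f :: "'a \<Rightarrow> int"
  assumes "\<And>i. i \<in> A \<Longrightarrow> c dvd f i \<and> \<not> 2 * c dvd f i"
  shows "\<exists>w. odd w \<and> prod f A = c ^ card A * w"
proof (intro exI conjI)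
  have f: "f i = c * (f i div c)" "odd (f i div c)" if "i \<in> A" for i
    using assms[OF that] by auto
  show "prod f A = c ^ card A * (\<Prod>i\<in>A. f i div c)"
    by (subst prod.cong[OF refl f(1)]) (simp_all add: prod.distrib)
  show "odd (\<Prod>i\<in>A. f i div c)"
    using f(2) by (cases "finite A") (simp_all add: even_prod_iff)
qed

lemma sum_one_odd_term:
  fixes f s :: "'a \<Rightarrow> int"
  assumes "finite S" "a \<in> S" "f a = c * w" "odd (s a * w)"
    and "\<And>p. p \<in> S - {a} \<Longrightarrow> 2 * c dvd f p"
  shows "\<exists>m. odd m \<and> (\<Sum>p\<in>S. s p * f p) = c * m"
proof (intro exI conjI)
  have "s p * f p = c * (2 * (s p * (f p div (2 * c))))" if p: "p \<in> S - {a}" for p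
  proof -
    obtain k where "f p = 2 * c * k" using assms(5)[OF p] by blast
    then show ?thesis by (cases "c = 0") simp_all
  qed
  then have "(\<Sum>p\<in>S - {a}. s p * f p) = (\<Sum>p\<in>S - {a}. c * (2 * (s p * (f p div (2 * c)))))"
    by (rule sum.cong[OF refl])
  then show "(\<Sum>p\<in>S. s p * f p) = c * (s a * w + 2 * (\<Sum>p\<in>S - {a}. s p * (f p div (2 * c))))"
    using assms(1-3) by (simp add: sum.remove sum_distrib_left algebra_simps)
  show "odd (s a * w + 2 * (\<Sum>p\<in>S - {a}. s p * (f p div (2 * c))))"
    using assms(4) by simp
qed

lemma det_hankel_mat:
  "det (hankel_mat x n) =
     (\<Sum>p | p permutes {0..<Suc n}. signof p * (\<Prod>i\<in>{0..<Suc n}. x (i + p i)))"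
  unfolding det_def hankel_mat_def by simp

lemma prod_hankel_term:
  "(\<Prod>i\<in>{0..<Suc n}. x (i + p i)) = x (p 0) * (\<Prod>i\<in>{1..n}. x (i + p i))"
proof -
  have "{0..<Suc n} = insert 0 {1..n}" by auto
  then show ?thesis by simp
qed

context
  fixes c :: int and x :: "nat \<Rightarrow> int"
  assumes c_even: "even c"
    and x_0: "x 0 = 1"
    and c_dvd: "\<And>i. i \<ge> 1 \<Longrightarrow> c dvd x i"
    and two_c_dvd_iff: "\<And>i. i \<ge> 1 \<Longrightarrow> 2 * c dvd x i \<longleftrightarrow> \<not> is_power_of_two i"
begin

lemma hankel_term_pairing_odd_multiple:
  assumes "power_of_two_pairing n p"
  shows "\<exists>w. odd w \<and> (\<Prod>i\<in>{0..<Suc n}. x (i + p i)) = c ^ n * w"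
proof -
  have "p permutes {1..n}" using assms unfolding power_of_two_pairing_def by blast
  then have "p 0 = 0" by (simp add: permutes_not_in)
  have "c dvd x (i + p i) \<and> \<not> 2 * c dvd x (i + p i)" if i: "i \<in> {1..n}" for i
  proof -
    have "is_power_of_two (i + p i)" using assms i unfolding power_of_two_pairing_def by blast
    then show ?thesis using i c_dvd[of "i + p i"] two_c_dvd_iff[of "i + p i"] by simp
  qed
  then have "\<exists>w. odd w \<and> (\<Prod>i\<in>{1..n}. x (i + p i)) = c ^ card {1..n} * w"
    by (rule prod_exact_multiples_odd)
  then show ?thesis unfolding prod_hankel_term using \<open>p 0 = 0\<close> x_0 by simp
qed

lemma hankel_term_other_dvd:
  assumes p: "p permutes {0..<Suc n}" and "power_of_two_pairing n q" "p \<noteq> q"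
  shows "2 * c ^ n dvd (\<Prod>i\<in>{0..<Suc n}. x (i + p i))"
proof (cases "p 0 = 0")
  case True
  have "{0..<Suc n} - {1..n} = {0}" by auto
  then have "p permutes {1..n}" using True by (intro permutes_superset[OF p]) auto
  then have "\<not> power_of_two_pairing n p"
    using assms(2,3) power_of_two_pairing_unique by blast
  then obtain j where j: "j \<in> {1..n}" "\<not> is_power_of_two (j + p j)"
    using \<open>p permutes {1..n}\<close> unfolding power_of_two_pairing_def by blast
  have "2 * c ^ card {1..n} dvd (\<Prod>i\<in>{1..n}. x (i + p i))"
    by (rule prod_dvd_power_times[OF _ j(1)]) (use j c_dvd two_c_dvd_iff in auto)
  then show ?thesis unfolding prod_hankel_term using True x_0 by simp
next
  case False
  have "i + p i \<ge> 1" for i using False by (cases i) auto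
  then have "(\<Prod>i\<in>{0..<Suc n}. c) dvd (\<Prod>i\<in>{0..<Suc n}. x (i + p i))"
    by (intro prod_dvd_prod c_dvd)
  moreover have "(\<Prod>i\<in>{0..<Suc n}. c) = c ^ Suc n" by simp
  moreover have "2 * c ^ n dvd c ^ Suc n" using c_even by auto
  ultimately show ?thesis by (metis dvd_trans)
qed

lemma det_hankel_mat_odd_multiple: "\<exists>m. odd m \<and> det (hankel_mat x n) = c ^ n * m"
proof -
  obtain q where q: "power_of_two_pairing n q" using power_of_two_pairing_exists by blast
  obtain w where w: "odd w" "(\<Prod>i\<in>{0..<Suc n}. x (i + q i)) = c ^ n * w"
    using hankel_term_pairing_odd_multiple[OF q] by blast
  show ?thesis unfolding det_hankel_mat
  proof (rule sum_one_odd_term[where a = q and w = w])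
    show "finite {p. p permutes {0..<Suc n}}" by (simp add: finite_permutations)
    show "q \<in> {p. p permutes {0..<Suc n}}"
      using q unfolding power_of_two_pairing_def by (auto intro: permutes_subset)
    show "odd (signof q * w)" using w(1) by (cases q rule: sign_cases) simp_all
  qed (use w(2) hankel_term_other_dvd q in auto)
qed

end

theorem lemma2p3:
  fixes k :: nat and x :: "nat \<Rightarrow> int"
  assumes "k > 0"
    and "x 0 = 1"
    and "\<And>i. i \<ge> 1 \<Longrightarrow> 2 * int k dvd x i"
    and "\<And>i. i \<ge> 1 \<Longrightarrow> (4 * int k dvd x i \<longleftrightarrow> \<not> is_power_of_two i)"
  shows "\<forall>n. \<exists>m::int. odd m \<and> det (hankel_mat x n) = (2 * int k) ^ n * m"
proof
  fix n
  show "\<exists>m. odd m \<and> det (hankel_mat x n) = (2 * int k) ^ n * m"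
    by (rule det_hankel_mat_odd_multiple) (use assms(2-4) in \<open>simp_all add: mult.assoc\<close>)
qed

end
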